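(* For every $k\ge1$, the square $$\begin{array}{ccc}H^1(C/\mathcal I^kC)&\xrightarrow{\psi^{(k)}}&H^2(\mathcal I^kC/\mathcal I^{k+1}C)\\ \downarrow\pi&&\downarrow\rho\\ E_k^{0,1}&\xrightarrow{\beta^{(k)}}&E_k^{k,2-k}\end{array}$$ commutes, i.e. $\rho\circ\psi^{(k)}=\beta^{(k)}\circ\pi$, where $\pi$ and $\rho$ are surjective.
   Context: Let $\mathcal R$ be a (possibly non-commutative) ring, $\mathcal I\subset\mathcal R$ a two-sided ideal, and $C=[C^1\xrightarrow{d}C^2]$ a complex of left $\mathcal R$-modules concentrated in degrees 1 and 2. The filtration $\{\mathcal I^iC\}_{i\ge0}$ gives a spectral sequence with $Z_k^{i,j}=\ker(\mathcal I^iC^{i+j}\xrightarrow{d}C^{i+j+1}/\mathcal I^{i+k}C^{i+j+1})$, $B_k^{i,j}=\mathcal I^iC^{i+j}\cap d(\mathcal I^{i-k}C^{i+j-1})$ (with $\mathcal I^m=\mathcal R$ for $m\le0$), $E_k^{i,j}=Z_k^{i,j}/(Z_{k-1}^{i+1,j-1}+B_{k-1}^{i,j})$, and differentials $d_k^{i,j}:E_k^{i,j}\to E_k^{i+k,j+1-k}$ induced by $d$; $E_1^{i,j}=H^{i+j}(\mathcal I^iC/\mathcal I^{i+1}C)$. The $k$-th derived Bockstein map is $\beta^{(k)}=d_k^{0,1}$. The $k$-th generalized Bockstein map $\psi^{(k)}$ is the connecting homomorphism $H^1(C/\mathcal I^kC)\to H^2(\mathcal I^kC/\mathcal I^{k+1}C)$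 of $0\to\mathcal I^kC/\mathcal I^{k+1}C\to C/\mathcal I^{k+1}C\to C/\mathcal I^kC\to0$. Here $E_k^{0,1}=\{a\in C^1:da\in\mathcal I^kC^2\}/\{a\in\mathcal IC^1:da\in\mathcal I^kC^2\}$, and $\pi:H^1(C/\mathcal I^kC)\to E_k^{0,1}$ sends the class of $a\bmod\mathcal I^kC^1$ (with $da\in\mathcal I^kC^2$) to the class of $a$; $\rho$ is the natural surjection $E_1^{k,2-k}\to E_k^{k,2-k}$ (note $d_j^{k,2-k}=0$ as $C^3=0$). *)

theory Defs
  imports "HOL-Algebra.Module" "HOL-Algebra.Ideal_Product" "HOL-Algebra.AbelCoset"
begin

text \<open>Same axioms as HOL-Algebra's module locale, but over an arbitrary ring.\<close>
locale left_module = R?: ring R + M?: abelian_group M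
  for R (structure) and M (structure) +
  assumes lm_smult_closed:
      "\<lbrakk>a \<in> carrier R; x \<in> carrier M\<rbrakk> \<Longrightarrow> a \<odot>\<^bsub>M\<^esub> x \<in> carrier M"
    and lm_smult_l_distr:
      "\<lbrakk>a \<in> carrier R; b \<in> carrier R; x \<in> carrier M\<rbrakk> \<Longrightarrow>
      (a \<oplus> b) \<odot>\<^bsub>M\<^esub> x = a \<odot>\<^bsub>M\<^esub> x \<oplus>\<^bsub>M\<^esub> b \<odot>\<^bsub>M\<^esub> x"
    and lm_smult_r_distr:
      "\<lbrakk>a \<in> carrier R; x \<in> carrier M; y \<in> carrier M\<rbrakk> \<Longrightarrow>
      a \<odot>\<^bsub>M\<^esub> (x \<oplus>\<^bsub>M\<^esub> y) = a \<odot>\<^bsub>M\<^esub> x \<oplus>\<^bsub>M\<^esub> a \<odot>\<^bsub>M\<^esub> y"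
    and lm_smult_assoc1:
      "\<lbrakk>a \<in> carrier R; b \<in> carrier R; x \<in> carrier M\<rbrakk> \<Longrightarrow>
      (a \<otimes> b) \<odot>\<^bsub>M\<^esub> x = a \<odot>\<^bsub>M\<^esub> (b \<odot>\<^bsub>M\<^esub> x)"
    and lm_smult_one:
      "x \<in> carrier M \<Longrightarrow> \<one> \<odot>\<^bsub>M\<^esub> x = x"

definition left_module_hom ::
  "('r, 'x) ring_scheme \<Rightarrow> ('r, 'b, 'c) module_scheme \<Rightarrow> ('r, 'b2, 'c2) module_scheme \<Rightarrow> ('b \<Rightarrow> 'b2) \<Rightarrow> bool"
  where "left_module_hom R M N f \<longleftrightarrow>
    f \<in> carrier M \<rightarrow> carrier N \<and>
    (\<forall>x\<in>carrier M. \<forall>y\<in>carrier M. f (x \<oplus>\<^bsub>M\<^esub> y) = f x \<oplus>\<^bsub>N\<^esub> f y) \<and>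
    (\<forall>a\<in>carrier R. \<forall>x\<in>carrier M. f (a \<odot>\<^bsub>M\<^esub> x) = a \<odot>\<^bsub>N\<^esub> f x)"

definition left_submodule ::
  "('r, 'x) ring_scheme \<Rightarrow> ('r, 'b, 'c) module_scheme \<Rightarrow> 'b set \<Rightarrow> bool"
  where "left_submodule R M N \<longleftrightarrow>
    N \<subseteq> carrier M \<and> \<zero>\<^bsub>M\<^esub> \<in> N \<and>
    (\<forall>x\<in>N. \<forall>y\<in>N. x \<oplus>\<^bsub>M\<^esub> y \<in> N) \<and> (\<forall>x\<in>N. \<ominus>\<^bsub>M\<^esub> x \<in> N) \<and>
    (\<forall>a\<in>carrier R. \<forall>x\<in>N. a \<odot>\<^bsub>M\<^esub> x \<in> N)"

definition ideal_times_module ::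
  "('r, 'x) ring_scheme \<Rightarrow> 'r set \<Rightarrow> ('r, 'b, 'c) module_scheme \<Rightarrow> 'b set"
  where "ideal_times_module R J M =
    \<Inter>{N. left_submodule R M N \<and> {a \<odot>\<^bsub>M\<^esub> x | a x. a \<in> J \<and> x \<in> carrier M} \<subseteq> N}"

primrec ideal_pow :: "('r, 'x) ring_scheme \<Rightarrow> 'r set \<Rightarrow> nat \<Rightarrow> 'r set" where
  "ideal_pow R I 0 = carrier R"
| "ideal_pow R I (Suc n) = ideal_prod R I (ideal_pow R I n)"

definition ideal_ipow :: "('r, 'x) ring_scheme \<Rightarrow> 'r set \<Rightarrow> int \<Rightarrow> 'r set" where
  "ideal_ipow R I m = (if m \<le> 0 then carrier R else ideal_pow R I (nat m))"

text \<open>A cochain complex is a family \<open>C :: int \<Rightarrow> module\<close> with differentials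
  \<open>d n : C n \<rightarrow> C (n+1)\<close>.\<close>
definition filt where
  "filt R I C i n = ideal_times_module R (ideal_ipow R I i) (C n)"

definition qcls where "qcls M N a = N +>\<^bsub>M\<^esub> a"
definition quot where "quot M A N = qcls M N ` A"
definition induced where "induced M N f X = qcls M N (f (SOME x. x \<in> X))"

text \<open>Cohomology \<open>H^n(A/B)\<close> of a quotient complex \<open>A/B\<close> (\<open>B \<subseteq> A \<subseteq> C\<close> subcomplexes,
  given degreewise as subsets): cycles \<open>{a \<in> A^n. d a \<in> B^(n+1)}\<close> modulo
  boundaries \<open>B^n + d(A^(n-1))\<close>.\<close>
definition Hcyc where "Hcyc d A B n = {a \<in> A n. d n a \<in> B (n + 1)}"
definition Hbd where "Hbd C d A B n = B n <+>\<^bsub>C n\<^esub> (d (n - 1) ` A (n - 1))"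
definition Hq where "Hq C d A B n = quot (C n) (Hcyc d A B n) (Hbd C d A B n)"

text \<open>Connecting homomorphism \<open>H^n(A/B) \<rightarrow> H^(n+1)(B/D)\<close> of
  \<open>0 \<rightarrow> B/D \<rightarrow> A/D \<rightarrow> A/B \<rightarrow> 0\<close> (\<open>D \<subseteq> B \<subseteq> A\<close>): lift a cycle representative
  \<open>a\<close> to \<open>A/D\<close> (by \<open>a\<close> itself), apply \<open>d\<close>, and take the class of \<open>d a \<in> B^(n+1)\<close>.\<close>
definition connecting where
  "connecting C d B D n = induced (C (n + 1)) (Hbd C d B D (n + 1)) (d n)"

definition ssZ where
  "ssZ R I C d k i j =
     {a \<in> filt R I C i (i + j). d (i + j) a \<in> filt R I C (i + k) (i + j + 1)}"
definition ssB where
  "ssB R I C d k i j =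
     filt R I C i (i + j) \<inter> d (i + j - 1) ` filt R I C (i - k) (i + j - 1)"
definition ssEden where
  "ssEden R I C d k i j =
     ssZ R I C d (k - 1) (i + 1) (j - 1) <+>\<^bsub>C (i + j)\<^esub> ssB R I C d (k - 1) i j"
definition ssE where
  "ssE R I C d k i j = quot (C (i + j)) (ssZ R I C d k i j) (ssEden R I C d k i j)"
definition ssd where
  "ssd R I C d k i j = induced (C (i + j + 1)) (ssEden R I C d k (i + k) (j + 1 - k)) (d (i + j))"

end

theory Submission
  imports Defs
begin

text \<open>Since C^3 = 0, every element of I^k C^2 is a cycle, so all four corners of the square
  are quotients of the same groups: H^1(C/I^k C) and E_k^{0,1} are quotients of
  {a \<in> C^1. d a \<in> I^k C^2} by I^k C^1 \<subseteq> {a \<in> I C^1. d a \<in> I^k C^2}, and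
  H^2(I^k C/I^{k+1} C) and E_k^{k,2-k} are quotients of I^k C^2 by
  I^{k+1} C^2 + d(I^k C^1) \<subseteq> I^{k+1} C^2 + (I^k C^2 \<inter> d(I C^1)).
  Hence \<pi> and \<rho> are the natural projections, so they are surjective, and both \<rho> \<circ> \<psi> and
  \<beta> \<circ> \<pi> send the class of a to the class of d a.\<close>

lemma left_submodule_carrier:
  assumes "left_module R M"
  shows "left_submodule R M (carrier M)"
proof -
  interpret left_module R M by fact
  show ?thesis unfolding left_submodule_def by (auto intro: lm_smult_closed)
qed

lemma left_submodule_Inter:
  assumes "S \<noteq> {}" and "\<And>N. N \<in> S \<Longrightarrow> left_submodule R M N"
  shows "left_submodule R M (\<Inter>S)"
  using assms unfolding left_submodule_def by blast

lemma left_submodule_Int: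
  assumes "left_submodule R M A" and "left_submodule R M B"
  shows "left_submodule R M (A \<inter> B)"
  using assms unfolding left_submodule_def by blast

lemma left_submodule_imp_additive_subgroup:
  assumes "left_submodule R M N"
  shows "additive_subgroup N M"
  using assms unfolding left_submodule_def
  by (auto simp: a_inv_def intro!: subgroup.intro additive_subgroup.intro)

lemma left_module_hom_imp_abelian_group_hom:
  assumes "left_module R M" and "left_module R N" and "left_module_hom R M N f"
  shows "abelian_group_hom M N f"
proof -
  interpret M: left_module R M by fact
  interpret N: left_module R N by fact
  show ?thesis
    using assms(3) unfolding left_module_hom_def
    by (intro abelian_group_homI M.abelian_group_axioms N.abelian_group_axioms
        group_hom.intro group_hom_axioms.intro M.a_group N.a_group) (auto simp: hom_def)
qed

lemma left_submodule_vimage: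
  assumes "left_module R M" and "left_module R N" and hom: "left_module_hom R M N f"
    and "left_submodule R N S"
  shows "left_submodule R M {x \<in> carrier M. f x \<in> S}"
proof -
  interpret M: left_module R M by fact
  interpret f: abelian_group_hom M N f
    by (rule left_module_hom_imp_abelian_group_hom[OF assms(1-3)])
  have "f (a \<odot>\<^bsub>M\<^esub> x) = a \<odot>\<^bsub>N\<^esub> f x" if "a \<in> carrier R" "x \<in> carrier M" for a x
    using hom that unfolding left_module_hom_def by blast
  then show ?thesis
    using assms(4) unfolding left_submodule_def by (auto intro: M.lm_smult_closed)
qed

lemma left_submodule_ideal_times_module:
  assumes "left_module R M" and "J \<subseteq> carrier R"
  shows "left_submodule R M (ideal_times_module R J M)"
proof -
  interpret left_module R M by fact
  show ?thesis
    unfolding ideal_times_module_def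
    using left_submodule_carrier[OF assms(1)] assms(2)
    by (intro left_submodule_Inter) (auto intro: lm_smult_closed)
qed

lemma ideal_times_module_least:
  assumes "left_submodule R M N" and "\<And>a x. a \<in> J \<Longrightarrow> x \<in> carrier M \<Longrightarrow> a \<odot>\<^bsub>M\<^esub> x \<in> N"
  shows "ideal_times_module R J M \<subseteq> N"
  unfolding ideal_times_module_def using assms by blast

lemma smult_in_ideal_times_module:
  assumes "a \<in> J" and "x \<in> carrier M"
  shows "a \<odot>\<^bsub>M\<^esub> x \<in> ideal_times_module R J M"
  unfolding ideal_times_module_def using assms by blast

lemma ideal_times_module_carrier:
  assumes "left_module R M"
  shows "ideal_times_module R (carrier R) M = carrier M"
proof
  show "ideal_times_module R (carrier R) M \<subseteq> carrier M"
    using left_submodule_ideal_times_module[OF assms] unfolding left_submodule_def by blast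
  interpret left_module R M by fact
  show "carrier M \<subseteq> ideal_times_module R (carrier R) M"
    using smult_in_ideal_times_module[OF R.one_closed] lm_smult_one by (metis subsetI)
qed

lemma ideal_times_module_mono:
  assumes "left_module R M" and "J \<subseteq> J'" and "J' \<subseteq> carrier R"
  shows "ideal_times_module R J M \<subseteq> ideal_times_module R J' M"
  using assms(2)
  by (intro ideal_times_module_least left_submodule_ideal_times_module[OF assms(1,3)]
      smult_in_ideal_times_module) auto

lemma image_ideal_times_module_subset:
  assumes "left_module R M" and "left_module R N" and hom: "left_module_hom R M N f"
    and "J \<subseteq> carrier R"
  shows "f ` ideal_times_module R J M \<subseteq> ideal_times_module R J N"
proof -
  have "ideal_times_module R J M \<subseteq> {x \<in> carrier M. f x \<in> ideal_times_module R J N}"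
  proof (rule ideal_times_module_least)
    show "left_submodule R M {x \<in> carrier M. f x \<in> ideal_times_module R J N}"
      by (rule left_submodule_vimage[OF assms(1-3) left_submodule_ideal_times_module[OF assms(2,4)]])
    fix a x assume "a \<in> J" and x: "x \<in> carrier M"
    then have a: "a \<in> carrier R" using assms(4) by blast
    have "f (a \<odot>\<^bsub>M\<^esub> x) = a \<odot>\<^bsub>N\<^esub> f x"
      using hom a x unfolding left_module_hom_def by blast
    moreover have "f x \<in> carrier N" and "a \<odot>\<^bsub>M\<^esub> x \<in> carrier M"
      using hom x a left_module.lm_smult_closed[OF assms(1)] unfolding left_module_hom_def by auto
    ultimately show "a \<odot>\<^bsub>M\<^esub> x \<in> {x \<in> carrier M. f x \<in> ideal_times_module R J N}"
      using smult_in_ideal_times_module[OF \<open>a \<in> J\<close>] by simp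
  qed
  then show ?thesis by blast
qed

lemma ideal_pow_is_ideal:
  assumes "ideal I R"
  shows "ideal (ideal_pow R I n) R"
proof -
  interpret ring R using assms by (rule ideal.axioms(2))
  show ?thesis by (induct n) (simp_all add: oneideal ideal_prod_is_ideal[OF assms])
qed

lemma ideal_pow_antimono:
  assumes "ideal I R" and "m \<le> n"
  shows "ideal_pow R I n \<subseteq> ideal_pow R I m"
  using assms(2)
proof (induct n rule: dec_induct)
  case (step n)
  interpret ring R using assms(1) by (rule ideal.axioms(2))
  have "ideal_pow R I (Suc n) \<subseteq> ideal_pow R I n"
    using ideal_prod_inter[OF assms(1) ideal_pow_is_ideal[OF assms(1)]] by simp
  with step show ?case by blast
qed simp

lemma ideal_ipow_subset_carrier:
  assumes "ideal I R"
  shows "ideal_ipow R I i \<subseteq> carrier R"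
  unfolding ideal_ipow_def using ideal.Icarr[OF ideal_pow_is_ideal[OF assms]] by auto

lemma ideal_ipow_antimono:
  assumes "ideal I R" and "i \<le> i'"
  shows "ideal_ipow R I i' \<subseteq> ideal_ipow R I i"
  using assms(2) ideal_ipow_subset_carrier[OF assms(1)] ideal_pow_antimono[OF assms(1), of "nat i" "nat i'"]
  unfolding ideal_ipow_def by auto

lemma abelian_group_hom_id:
  assumes "abelian_group G"
  shows "abelian_group_hom G G id"
  using assms
  by (intro abelian_group_homI group_hom.intro group_hom_axioms.intro abelian_group.a_group)
    (auto simp: hom_def)

lemma additive_subgroup_Int:
  assumes "additive_subgroup A G" and "additive_subgroup B G"
  shows "additive_subgroup (A \<inter> B) G"
  using assms unfolding additive_subgroup_def subgroup_def by auto

lemma (in abelian_group_hom) additive_subgroup_image: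
  assumes "additive_subgroup S G"
  shows "additive_subgroup (h ` S) H"
  using group_hom.subgroup_img_is_subgroup[OF a_group_hom] assms
  unfolding additive_subgroup_def by simp

lemma (in abelian_group) set_add_zero_right:
  assumes "A \<subseteq> carrier G"
  shows "A <+> {\<zero>} = A"
  unfolding set_add_def' using assms by auto (metis r_zero subsetD)

lemma (in abelian_group) subset_set_add_right:
  assumes "\<zero> \<in> A" and "B \<subseteq> carrier G"
  shows "B \<subseteq> A <+> B"
  unfolding set_add_def' using assms by auto (metis l_zero subsetD)

lemma induced_qcls:
  assumes "abelian_group_hom M N f" and "additive_subgroup H M" and "additive_subgroup K N"
    and "f ` H \<subseteq> K" and a: "a \<in> carrier M"
  shows "induced N K f (qcls M H a) = qcls N K (f a)"
proof -
  interpret f: abelian_group_hom M N f by fact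
  interpret H: additive_subgroup H M by fact
  interpret K: additive_subgroup K N by fact
  have "a \<in> H +>\<^bsub>M\<^esub> a"
    using f.G.a_rcosI[of "\<zero>\<^bsub>M\<^esub>" H a] a H.a_subset by simp
  then have "(SOME x. x \<in> H +>\<^bsub>M\<^esub> a) \<in> H +>\<^bsub>M\<^esub> a" by (rule someI)
  then obtain h where h: "h \<in> H" and rep: "(SOME x. x \<in> H +>\<^bsub>M\<^esub> a) = h \<oplus>\<^bsub>M\<^esub> a"
    unfolding a_r_coset_def' by blast
  have "f h \<in> K" using h \<open>f ` H \<subseteq> K\<close> by blast
  then have "f h \<oplus>\<^bsub>N\<^esub> f a \<in> K +>\<^bsub>N\<^esub> f a"
    using f.H.a_rcosI K.a_subset a by simp
  moreover have "f (h \<oplus>\<^bsub>M\<^esub> a) = f h \<oplus>\<^bsub>N\<^esub> f a"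
    using h H.a_subset a by auto
  ultimately show ?thesis
    unfolding induced_def qcls_def rep
    using f.H.a_repr_independence[OF _ _ K.a_subgroup] a by simp
qed

lemma induced_id_qcls:
  assumes "abelian_group M" and "additive_subgroup H M" and "additive_subgroup K M"
    and "H \<subseteq> K" and "a \<in> carrier M"
  shows "induced M K id (qcls M H a) = qcls M K a"
  using induced_qcls[OF abelian_group_hom_id[OF assms(1)] assms(2,3) _ assms(5)] assms(4) by simp

lemma induced_id_image_quot:
  assumes "abelian_group M" and "additive_subgroup H M" and "additive_subgroup K M"
    and "H \<subseteq> K" and "A \<subseteq> carrier M"
  shows "induced M K id ` quot M A H = quot M A K"
  unfolding quot_def image_image
  using induced_id_qcls[OF assms(1-4)] assms(5) by (intro image_cong) auto

locale ideal_filtered_complex =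
  fixes R :: "('r, 'x) ring_scheme" and I :: "'r set"
    and C :: "int \<Rightarrow> ('r, 'b, 'c) module_scheme" and d :: "int \<Rightarrow> 'b \<Rightarrow> 'b"
  assumes ideal_I: "ideal I R"
    and left_module_C: "\<And>n. left_module R (C n)"
    and left_module_hom_d: "\<And>n. left_module_hom R (C n) (C (n + 1)) (d n)"
begin

abbreviation F :: "int \<Rightarrow> int \<Rightarrow> 'b set" where "F \<equiv> filt R I C"

lemma abelian_group_C: "abelian_group (C n)"
  using left_module_C unfolding left_module_def by blast

lemma abelian_group_hom_d: "abelian_group_hom (C n) (C (n + 1)) (d n)"
  by (rule left_module_hom_imp_abelian_group_hom[OF left_module_C left_module_C left_module_hom_d])

lemma left_submodule_filt: "left_submodule R (C n) (F i n)"
  unfolding filt_def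
  by (rule left_submodule_ideal_times_module[OF left_module_C ideal_ipow_subset_carrier[OF ideal_I]])

lemma additive_subgroup_filt: "additive_subgroup (F i n) (C n)"
  by (rule left_submodule_imp_additive_subgroup[OF left_submodule_filt])

lemma filt_subset_carrier: "F i n \<subseteq> carrier (C n)"
  using left_submodule_filt unfolding left_submodule_def by blast

lemma filt_nonpos: "i \<le> 0 \<Longrightarrow> F i n = carrier (C n)"
  unfolding filt_def ideal_ipow_def using ideal_times_module_carrier[OF left_module_C] by simp

lemma filt_antimono: "i \<le> i' \<Longrightarrow> F i' n \<subseteq> F i n"
  unfolding filt_def
  by (intro ideal_times_module_mono[OF left_module_C] ideal_ipow_antimono[OF ideal_I]
      ideal_ipow_subset_carrier[OF ideal_I])

lemma image_d_filt_subset: "d n ` F i n \<subseteq> F i (n + 1)"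
  unfolding filt_def
  by (rule image_ideal_times_module_subset[OF left_module_C left_module_C left_module_hom_d
        ideal_ipow_subset_carrier[OF ideal_I]])

end

locale two_term_filtered_complex = ideal_filtered_complex +
  assumes trivial_C: "\<And>n. n \<notin> {1, 2} \<Longrightarrow> carrier (C n) = {\<zero>\<^bsub>C n\<^esub>}"
begin

lemma filt_trivial: "n \<notin> {1, 2} \<Longrightarrow> F i n = carrier (C n)"
proof -
  assume "n \<notin> {1, 2}"
  then have "carrier (C n) = {\<zero>\<^bsub>C n\<^esub>}" by (rule trivial_C)
  moreover have "\<zero>\<^bsub>C n\<^esub> \<in> F i n"
    by (rule additive_subgroup.zero_closed[OF additive_subgroup_filt])
  ultimately show ?thesis using filt_subset_carrier[of i n] by auto
qed

lemma d_into_degree_three: "x \<in> carrier (C 2) \<Longrightarrow> d 2 x \<in> F i 3"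
  using abelian_group_hom.hom_closed[OF abelian_group_hom_d, of x 2] filt_trivial[of 3 i] by simp

lemma d_zero: "d n \<zero>\<^bsub>C n\<^esub> = \<zero>\<^bsub>C (n + 1)\<^esub>"
  by (rule abelian_group_hom.hom_zero[OF abelian_group_hom_d])

lemma abelian_group_hom_d_1: "abelian_group_hom (C 1) (C 2) (d 1)"
  using abelian_group_hom_d[of 1] by simp

lemma filt_vimage_d_deg2: "{a \<in> F i 2. d 2 a \<in> F j 3} = F i 2"
  by (auto intro: d_into_degree_three dest: subsetD[OF filt_subset_carrier])

lemma ssZ_deg2:
  assumes "i + j = 2"
  shows "ssZ R I C d k i j = F i 2"
  unfolding ssZ_def assms by (simp add: filt_vimage_d_deg2)

lemma ssEden_deg2:
  assumes "i + j = 2"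
  shows "ssEden R I C d k i j = F (i + 1) 2 <+>\<^bsub>C 2\<^esub> (F i 2 \<inter> d 1 ` F (i - k + 1) 1)"
proof -
  have "ssZ R I C d (k - 1) (i + 1) (j - 1) = F (i + 1) 2" using assms by (intro ssZ_deg2) simp
  moreover have "ssB R I C d (k - 1) i j = F i 2 \<inter> d 1 ` F (i - k + 1) 1"
    unfolding ssB_def assms by (simp add: algebra_simps)
  ultimately show ?thesis unfolding ssEden_def assms by simp
qed

lemma ssE_deg2:
  assumes "i + j = 2"
  shows "ssE R I C d k i j = quot (C 2) (F i 2) (ssEden R I C d k i j)"
  unfolding ssE_def ssZ_deg2[OF assms] assms ..

lemma additive_subgroup_ssEden_deg2:
  assumes "i + j = 2"
  shows "additive_subgroup (ssEden R I C d k i j) (C 2)"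
  unfolding ssEden_deg2[OF assms]
  using abelian_group_hom.additive_subgroup_image[OF abelian_group_hom_d additive_subgroup_filt, of 1]
  by (intro abelian_group.add_additive_subgroups[OF abelian_group_C] additive_subgroup_filt
      additive_subgroup_Int) simp_all

lemma ssEden_k: "ssEden R I C d k k (2 - k) = F (k + 1) 2 <+>\<^bsub>C 2\<^esub> (F k 2 \<inter> d 1 ` F 1 1)"
  by (simp add: ssEden_deg2)

lemma additive_subgroup_ssEden_k: "additive_subgroup (ssEden R I C d k k (2 - k)) (C 2)"
  by (rule additive_subgroup_ssEden_deg2) simp

lemma ssEden_0_1: "ssEden R I C d k 0 1 = {a \<in> F 1 1. d 1 a \<in> F k 2}"
proof -
  have "ssB R I C d (k - 1) 0 1 = {\<zero>\<^bsub>C 1\<^esub>}"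
    unfolding ssB_def
    using filt_trivial[of 0] trivial_C[of 0] d_zero[of 0]
      additive_subgroup.zero_closed[OF additive_subgroup_filt[of 0 1]] by auto
  moreover have "{a \<in> F 1 1. d 1 a \<in> F k 2} \<subseteq> carrier (C 1)"
    using filt_subset_carrier by blast
  ultimately show ?thesis
    unfolding ssEden_def ssZ_def
    using abelian_group.set_add_zero_right[OF abelian_group_C] by (simp add: add.commute)
qed

lemma ssE_0_1:
  "ssE R I C d k 0 1 = quot (C 1) {a \<in> carrier (C 1). d 1 a \<in> F k 2} (ssEden R I C d k 0 1)"
  unfolding ssE_def ssZ_def by (simp add: filt_nonpos)

lemma additive_subgroup_ssEden_0_1: "additive_subgroup (ssEden R I C d k 0 1) (C 1)"
proof -
  have "left_submodule R (C 1) (F 1 1 \<inter> {a \<in> carrier (C 1). d 1 a \<in> F k (1 + 1)})"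
    by (intro left_submodule_Int left_submodule_filt
        left_submodule_vimage[OF left_module_C left_module_C left_module_hom_d])
  moreover have "F 1 1 \<inter> {a \<in> carrier (C 1). d 1 a \<in> F k (1 + 1)} = ssEden R I C d k 0 1"
    unfolding ssEden_0_1 using filt_subset_carrier by auto
  ultimately show ?thesis by (metis left_submodule_imp_additive_subgroup)
qed

lemma Hq_1:
  "Hq C d (\<lambda>n. carrier (C n)) (F k) 1 = quot (C 1) {a \<in> carrier (C 1). d 1 a \<in> F k 2} (F k 1)"
proof -
  have "d 0 ` carrier (C 0) = {\<zero>\<^bsub>C 1\<^esub>}" using trivial_C[of 0] d_zero[of 0] by simp
  then have "Hbd C d (\<lambda>n. carrier (C n)) (F k) 1 = F k 1"
    unfolding Hbd_def
    using abelian_group.set_add_zero_right[OF abelian_group_C filt_subset_carrier] by simp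
  then show ?thesis unfolding Hq_def Hcyc_def by simp
qed

lemma Hq_2: "Hq C d (F k) (F (k + 1)) 2 = quot (C 2) (F k 2) (Hbd C d (F k) (F (k + 1)) 2)"
  unfolding Hq_def Hcyc_def by (simp add: filt_vimage_d_deg2)

lemma Hbd_2_eq_ssEden_1_k: "Hbd C d (F k) (F (k + 1)) 2 = ssEden R I C d 1 k (2 - k)"
proof -
  have "F k 2 \<inter> d 1 ` F k 1 = d 1 ` F k 1" using image_d_filt_subset[of 1 k] by auto
  then show ?thesis by (simp add: Hbd_def ssEden_deg2)
qed

lemma ssE_1_k_eq_Hq_2: "ssE R I C d 1 k (2 - k) = Hq C d (F k) (F (k + 1)) 2"
  by (simp add: ssE_deg2 Hq_2 Hbd_2_eq_ssEden_1_k)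

lemma additive_subgroup_Hbd_2: "additive_subgroup (Hbd C d (F k) (F (k + 1)) 2) (C 2)"
  unfolding Hbd_2_eq_ssEden_1_k by (rule additive_subgroup_ssEden_deg2) simp

lemma filt_subset_ssEden_0_1:
  assumes "k \<ge> 1"
  shows "F k 1 \<subseteq> ssEden R I C d k 0 1"
  unfolding ssEden_0_1 using filt_antimono[OF assms, of 1] image_d_filt_subset[of 1 k] by auto

lemma Hbd_2_subset_ssEden_k:
  assumes "k \<ge> 1"
  shows "Hbd C d (F k) (F (k + 1)) 2 \<subseteq> ssEden R I C d k k (2 - k)"
proof -
  have "d 1 ` F k 1 \<subseteq> F k 2 \<inter> d 1 ` F 1 1"
    using filt_antimono[OF assms, of 1] image_d_filt_subset[of 1 k] by auto
  then have "F (k + 1) 2 <+>\<^bsub>C 2\<^esub> d 1 ` F k 1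
      \<subseteq> F (k + 1) 2 <+>\<^bsub>C 2\<^esub> (F k 2 \<inter> d 1 ` F 1 1)"
    unfolding set_add_def by (intro mono_set_mult) simp_all
  then show ?thesis unfolding Hbd_def ssEden_k by simp
qed

lemma image_d_subset_Hbd_2: "d 1 ` F k 1 \<subseteq> Hbd C d (F k) (F (k + 1)) 2"
proof -
  have "d 1 ` F k 1 \<subseteq> carrier (C 2)"
    using image_d_filt_subset[of 1 k] filt_subset_carrier[of k 2] by simp
  then show ?thesis
    unfolding Hbd_def
    by (simp add: abelian_group.subset_set_add_right[OF abelian_group_C
          additive_subgroup.zero_closed[OF additive_subgroup_filt]])
qed

lemma image_d_ssEden_0_1_subset: "d 1 ` ssEden R I C d k 0 1 \<subseteq> ssEden R I C d k k (2 - k)"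
proof -
  have "F k 2 \<inter> d 1 ` F 1 1 \<subseteq> carrier (C 2)" using filt_subset_carrier by blast
  then have "F k 2 \<inter> d 1 ` F 1 1 \<subseteq> ssEden R I C d k k (2 - k)"
    unfolding ssEden_k by (simp add: abelian_group.subset_set_add_right[OF abelian_group_C
          additive_subgroup.zero_closed[OF additive_subgroup_filt]])
  moreover have "d 1 ` ssEden R I C d k 0 1 \<subseteq> F k 2 \<inter> d 1 ` F 1 1"
    unfolding ssEden_0_1 by auto
  ultimately show ?thesis by blast
qed

lemma induced_id_Hq_1_onto_ssE_0_1:
  assumes "k \<ge> 1"
  shows "induced (C 1) (ssEden R I C d k 0 1) id ` Hq C d (\<lambda>n. carrier (C n)) (F k) 1
    = ssE R I C d k 0 1"
  unfolding Hq_1 ssE_0_1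
  by (intro induced_id_image_quot abelian_group_C additive_subgroup_filt
      additive_subgroup_ssEden_0_1 filt_subset_ssEden_0_1[OF assms]) auto

lemma induced_id_Hq_2_onto_ssE_k:
  assumes "k \<ge> 1"
  shows "induced (C 2) (ssEden R I C d k k (2 - k)) id ` Hq C d (F k) (F (k + 1)) 2
    = ssE R I C d k k (2 - k)"
proof -
  have "ssE R I C d k k (2 - k) = quot (C 2) (F k 2) (ssEden R I C d k k (2 - k))"
    by (rule ssE_deg2) simp
  then show ?thesis
    unfolding Hq_2
    using induced_id_image_quot[OF abelian_group_C additive_subgroup_Hbd_2
        additive_subgroup_ssEden_k Hbd_2_subset_ssEden_k[OF assms] filt_subset_carrier]
    by simp
qed

lemma induced_id_connecting_eq_ssd_induced_id:
  assumes "k \<ge> 1" and "X \<in> Hq C d (\<lambda>n. carrier (C n)) (F k) 1"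
  shows "induced (C 2) (ssEden R I C d k k (2 - k)) id (connecting C d (F k) (F (k + 1)) 1 X)
    = ssd R I C d k 0 1 (induced (C 1) (ssEden R I C d k 0 1) id X)"
proof -
  obtain a where a: "a \<in> carrier (C 1)" and X: "X = qcls (C 1) (F k 1) a"
    using assms(2) unfolding Hq_1 quot_def by blast
  have da: "d 1 a \<in> carrier (C 2)"
    using abelian_group_hom.hom_closed[OF abelian_group_hom_d_1 a] .
  have "connecting C d (F k) (F (k + 1)) 1 X = qcls (C 2) (Hbd C d (F k) (F (k + 1)) 2) (d 1 a)"
    unfolding connecting_def X
    using induced_qcls[OF abelian_group_hom_d_1 additive_subgroup_filt additive_subgroup_Hbd_2
        image_d_subset_Hbd_2 a] by simp
  then have lhs: "induced (C 2) (ssEden R I C d k k (2 - k)) id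
      (connecting C d (F k) (F (k + 1)) 1 X) = qcls (C 2) (ssEden R I C d k k (2 - k)) (d 1 a)"
    using induced_id_qcls[OF abelian_group_C additive_subgroup_Hbd_2
        additive_subgroup_ssEden_k Hbd_2_subset_ssEden_k[OF assms(1)] da] by simp
  have "induced (C 1) (ssEden R I C d k 0 1) id X = qcls (C 1) (ssEden R I C d k 0 1) a"
    unfolding X
    using induced_id_qcls[OF abelian_group_C additive_subgroup_filt
        additive_subgroup_ssEden_0_1 filt_subset_ssEden_0_1[OF assms(1)] a] .
  then have rhs: "ssd R I C d k 0 1 (induced (C 1) (ssEden R I C d k 0 1) id X)
      = qcls (C 2) (ssEden R I C d k k (2 - k)) (d 1 a)"
    unfolding ssd_def
    using induced_qcls[OF abelian_group_hom_d_1 additive_subgroup_ssEden_0_1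
        additive_subgroup_ssEden_k image_d_ssEden_0_1_subset a] by simp
  show ?thesis unfolding lhs rhs ..
qed

end

theorem propositionA4:
  fixes R :: "('r, 'x) ring_scheme" and I :: "'r set"
    and C :: "int \<Rightarrow> ('r, 'b, 'c) module_scheme" and d :: "int \<Rightarrow> 'b \<Rightarrow> 'b"
    and k :: int
  assumes "ring R" and "ideal I R"
    and "\<And>n. left_module R (C n)"
    and "\<And>n. n \<notin> {1, 2} \<Longrightarrow> carrier (C n) = {\<zero>\<^bsub>C n\<^esub>}"
    and "\<And>n. left_module_hom R (C n) (C (n + 1)) (d n)"
    and "k \<ge> 1"
  shows
    "let H1 = Hq C d (\<lambda>n. carrier (C n)) (filt R I C k) 1;
         H2 = Hq C d (filt R I C k) (filt R I C (k + 1)) 2;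
         \<psi> = connecting C d (filt R I C k) (filt R I C (k + 1)) 1;
         \<beta> = ssd R I C d k 0 1;
         \<pi> = induced (C 1) (ssEden R I C d k 0 1) id;
         \<rho> = induced (C 2) (ssEden R I C d k k (2 - k)) id
     in ssE R I C d 1 k (2 - k) = H2
        \<and> (\<forall>X\<in>H1. \<rho> (\<psi> X) = \<beta> (\<pi> X))
        \<and> \<pi> ` H1 = ssE R I C d k 0 1
        \<and> \<rho> ` H2 = ssE R I C d k k (2 - k)"
proof -
  interpret two_term_filtered_complex R I C d
    using assms(2-5)
    by (simp add: two_term_filtered_complex_def two_term_filtered_complex_axioms_def
        ideal_filtered_complex_def)
  show ?thesis
    unfolding Let_def
    using ssE_1_k_eq_Hq_2 induced_id_connecting_eq_ssd_induced_id[OF assms(6)]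
      induced_id_Hq_1_onto_ssE_0_1[OF assms(6)] induced_id_Hq_2_onto_ssE_k[OF assms(6)]
    by blast
qed

end
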